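(* Let $l=m_5(e_3+e_4+e_5)+m_6e_6+m_7e_7+m_8e_8$ with $m_5,\dots,m_8\in\mathbb Z$ and $m_5+m_6+m_7+m_8$ even (these are exactly the vectors of $E_8$ orthogonal to $L_2=\langle e_2+e_1,e_2-e_1,e_4-e_3,e_5-e_4\rangle_\mathbb Z\cong 2A_1\oplus A_2$). Then $l$ is orthogonal to exactly $10$ roots of $E_8$ if and only if (i) $m_j\ne0$ for every $j\in\{5,6,7,8\}$ and $m_i\ne\pm m_j$ for all $5\le i<j\le8$, and (ii) $km_5\ne\pm m_6\pm m_7\pm m_8$ for $k\in\{1,3\}$ and every choice of signs. Moreover, $l$ is orthogonal to exactly $14$ roots of $E_8$ if (i) holds, (ii) holds for $k=1$, and there is exactly one relation of the form $3m_5=\pm m_6\pm m_7\pm m_8$ (exactly one choice of signs).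
   Context: $e_1,\dots,e_8$ is an orthonormal basis of $\mathbb R^8$ and $E_8=\{x\in\mathbb Z^8\cup(\mathbb Z+\tfrac12)^8\mid \sum_i x_i\in2\mathbb Z\}$; its roots (vectors of square $2$) are the $112$ vectors $\pm e_i\pm e_j$ ($i<j$) and the $128$ vectors $\frac12\sum_{i=1}^8(-1)^{\nu_i}e_i$ with $\sum\nu_i$ even. *)

theory Defs
  imports Main "HOL-Library.FuncSet" Complex_Main
begin

text \<open>Vectors of R^8 are represented as functions nat => real supported on the
index set {1..8}; the coordinate x i is the coefficient of e_i.\<close>

definition e8_lattice :: "(nat \<Rightarrow> real) set" where
  "e8_lattice = {x. (\<forall>i. i \<notin> {1..8} \<longrightarrow> x i = 0) \<and>
      ((\<forall>i\<in>{1..8}. x i \<in> \<int>) \<or> (\<forall>i\<in>{1..8}. x i - 1/2 \<in> \<int>)) \<and>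
      (\<exists>k::int. (\<Sum>i=1..8. x i) = 2 * of_int k)}"

definition inner8 :: "(nat \<Rightarrow> real) \<Rightarrow> (nat \<Rightarrow> real) \<Rightarrow> real" where
  "inner8 x y = (\<Sum>i=1..8. x i * y i)"

definition e8_roots :: "(nat \<Rightarrow> real) set" where
  "e8_roots = {x \<in> e8_lattice. inner8 x x = 2}"

definition num_orth_roots :: "(nat \<Rightarrow> real) \<Rightarrow> nat" where
  "num_orth_roots l = card {r \<in> e8_roots. inner8 l r = 0}"

definition lvec :: "int \<Rightarrow> int \<Rightarrow> int \<Rightarrow> int \<Rightarrow> nat \<Rightarrow> real" where
  "lvec m5 m6 m7 m8 = (\<lambda>i. if i \<in> {3,4,5} then of_int m5 else if i = 6 then of_int m6
      else if i = 7 then of_int m7 else if i = 8 then of_int m8 else 0)"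

end

theory Submission
  imports Defs
begin

(* Every root of E8 is either +-e_i +-e_j or (1/2) sum eps_i e_i with eps_i = +-1 and
   prod eps_i = 1.  Besides the 10 roots of L2 (+-e1 +-e2 and +-(e_i - e_j), 3 <= i < j <= 5),
   an integral root is orthogonal to l only if two of 0, |m5|, |m6|, |m7|, |m8| coincide, and a
   half-integral one only if m5 (eps3 + eps4 + eps5) = -(eps6 m6 + eps7 m7 + eps8 m8); since
   eps3 + eps4 + eps5 is +-1 or +-3, this is a relation as in (ii) with k = 1 or k = 3.  Under (i)
   and (ii) for k = 1, every sign solution of 3 m5 = s6 m6 + s7 m7 + s8 m8 yields exactly four
   further roots (free choice of eps1 and of eps3 = eps4 = eps5), so l is orthogonal to 10 + 4 N
   roots, N the number of such solutions. *)

lemma prod_signs: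
  fixes \<epsilon> :: "'a \<Rightarrow> int"
  assumes "\<forall>x\<in>A. \<epsilon> x \<in> {-1, 1}"
  shows "(\<Prod>x\<in>A. \<epsilon> x) \<in> {-1, 1}"
  using assms by (induction A rule: infinite_finite_induct) auto

lemma four_dvd_sum_signs_minus_prod:
  fixes \<epsilon> :: "'a \<Rightarrow> int"
  assumes "finite A" "\<forall>x\<in>A. \<epsilon> x \<in> {-1, 1}"
  shows "4 dvd (\<Sum>x\<in>A. \<epsilon> x) - (\<Prod>x\<in>A. \<epsilon> x) - int (card A) + 1"
  using assms
proof (induction A rule: finite_induct)
  case (insert x A)
  let ?s = "\<Sum>y\<in>A. \<epsilon> y" and ?p = "\<Prod>y\<in>A. \<epsilon> y"
  have "2 dvd 1 - ?p" "2 dvd 1 - \<epsilon> x"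
    using insert.prems prod_signs[of A \<epsilon>] by auto
  then have "2 * 2 dvd (1 - ?p) * (1 - \<epsilon> x)"
    by (rule mult_dvd_mono)
  with insert have "4 dvd (?s - ?p - int (card A) + 1) - (1 - ?p) * (1 - \<epsilon> x)"
    by (simp add: dvd_diff)
  moreover have "(\<Sum>y\<in>insert x A. \<epsilon> y) - (\<Prod>y\<in>insert x A. \<epsilon> y) - int (card (insert x A)) + 1
      = (?s - ?p - int (card A) + 1) - (1 - ?p) * (1 - \<epsilon> x)"
    using insert.hyps by (simp add: algebra_simps)
  ultimately show ?case by (simp only:)
qed simp

lemma four_dvd_sum_signs_iff:
  fixes \<epsilon> :: "'a \<Rightarrow> int"
  assumes "finite A" "4 dvd card A" "\<forall>x\<in>A. \<epsilon> x \<in> {-1, 1}"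
  shows "4 dvd (\<Sum>x\<in>A. \<epsilon> x) \<longleftrightarrow> (\<Prod>x\<in>A. \<epsilon> x) = 1"
proof -
  have "4 dvd int (card A)"
    using assms(2) by presburger
  with four_dvd_sum_signs_minus_prod[OF assms(1,3)]
  have "4 dvd ((\<Sum>x\<in>A. \<epsilon> x) - (\<Prod>x\<in>A. \<epsilon> x) - int (card A) + 1) + int (card A)"
    by (rule dvd_add)
  then have "4 dvd (\<Sum>x\<in>A. \<epsilon> x) - (\<Prod>x\<in>A. \<epsilon> x) + 1"
    by (simp add: algebra_simps)
  moreover have "(\<Prod>x\<in>A. \<epsilon> x) \<in> {-1, 1}"
    using prod_signs[OF assms(3)] .
  moreover have "\<not> 4 dvd (2::int)" by simp
  ultimately show ?thesis
    by (smt (verit, best) dvd_add_right_iff insertE singletonD)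
qed

lemma atLeastAtMost_1_8: "{1..8::nat} = {1, 2, 3, 4, 5, 6, 7, 8}"
  by auto

definition integral_root :: "nat \<Rightarrow> nat \<Rightarrow> int \<Rightarrow> int \<Rightarrow> nat \<Rightarrow> real" where
  "integral_root i j a b = (\<lambda>k. if k = i then of_int a else if k = j then of_int b else 0)"

definition half_root :: "(nat \<Rightarrow> int) \<Rightarrow> nat \<Rightarrow> real" where
  "half_root \<epsilon> = (\<lambda>k. if k \<in> {1..8} then of_int (\<epsilon> k) / 2 else 0)"

lemma half_root_cong: "(\<And>k. k \<in> {1..8} \<Longrightarrow> \<epsilon> k = \<delta> k) \<Longrightarrow> half_root \<epsilon> = half_root \<delta>"
  by (auto simp: half_root_def)

lemma half_root_eqD: "half_root \<epsilon> = half_root \<delta> \<Longrightarrow> k \<in> {1..8} \<Longrightarrow> \<epsilon> k = \<delta> k"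
  by (drule fun_cong[of _ _ k]) (simp add: half_root_def)

lemma inner8_integral_root:
  assumes "i \<in> {1..8}" "j \<in> {1..8}" "i \<noteq> j"
  shows "inner8 x (integral_root i j a b) = x i * of_int a + x j * of_int b"
proof -
  have "inner8 x (integral_root i j a b)
      = (\<Sum>k=1..8. (if k = i then x k * of_int a else 0) + (if k = j then x k * of_int b else 0))"
    unfolding inner8_def integral_root_def using assms(3) by (intro sum.cong) auto
  then show ?thesis
    using assms(1,2) by (simp add: sum.distrib)
qed

lemma inner8_half_root: "inner8 x (half_root \<epsilon>) = (\<Sum>k=1..8. x k * of_int (\<epsilon> k)) / 2"
  unfolding inner8_def half_root_def by (simp add: sum_divide_distrib)

lemma integral_root_in_e8_roots:
  assumes "1 \<le> i" "i < j" "j \<le> 8" "a \<in> {-1, 1}" "b \<in> {-1, 1}"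
  shows "integral_root i j a b \<in> e8_roots"
proof -
  let ?r = "integral_root i j a b"
  have ij: "i \<in> {1..8}" "j \<in> {1..8}" "i \<noteq> j" using assms(1-3) by auto
  have "(\<Sum>k=1..8. ?r k) = of_int a + of_int b"
    using inner8_integral_root[OF ij, of "\<lambda>_. 1"] by (simp add: inner8_def)
  also have "\<dots> = 2 * of_int ((a + b) div 2)"
    using assms(4,5) by auto
  finally have "?r \<in> e8_lattice"
    using ij unfolding e8_lattice_def by (auto simp: integral_root_def)
  moreover have "inner8 ?r ?r = 2"
    using assms(4,5) ij by (auto simp: inner8_integral_root) (auto simp: integral_root_def)
  ultimately show ?thesis
    unfolding e8_roots_def by simp
qed

lemma half_root_in_e8_roots:
  assumes signs: "\<forall>k\<in>{1..8}. \<epsilon> k \<in> {-1, 1}" and even: "(\<Prod>k=1..8. \<epsilon> k) = 1"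
  shows "half_root \<epsilon> \<in> e8_roots"
proof -
  have "4 dvd (\<Sum>k=1..8. \<epsilon> k)"
    using four_dvd_sum_signs_iff[of "{1..8::nat}" \<epsilon>] signs even by simp
  then obtain c where c: "(\<Sum>k=1..8. \<epsilon> k) = 4 * c" ..
  have "(\<Sum>k=1..8. half_root \<epsilon> k) = of_int (\<Sum>k=1..8. \<epsilon> k) / 2"
    using inner8_half_root[of "\<lambda>_. 1" \<epsilon>] by (simp add: inner8_def)
  also have "\<dots> = 2 * of_int c"
    unfolding c by simp
  finally have "(\<Sum>k=1..8. half_root \<epsilon> k) = 2 * of_int c" .
  moreover have "half_root \<epsilon> k - 1/2 \<in> \<int>" if "k \<in> {1..8}" for k
  proof -
    have "half_root \<epsilon> k - 1/2 = of_int ((\<epsilon> k - 1) div 2)"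
      using signs[rule_format, OF that] that by (auto simp: half_root_def)
    then show ?thesis by simp
  qed
  ultimately have "half_root \<epsilon> \<in> e8_lattice"
    unfolding e8_lattice_def by (auto simp: half_root_def)
  moreover have "inner8 (half_root \<epsilon>) (half_root \<epsilon>) = 2"
  proof -
    have "inner8 (half_root \<epsilon>) (half_root \<epsilon>) = (\<Sum>k::nat=1..8. 1 / 4 :: real)"
      unfolding inner8_def using signs by (intro sum.cong) (auto simp: half_root_def dest!: bspec)
    then show ?thesis by simp
  qed
  ultimately show ?thesis
    unfolding e8_roots_def by simp
qed

lemma int_square_le_2:
  fixes z :: int
  assumes "z * z \<le> 2"
  shows "z \<in> {-1, 0, 1}"
proof -
  have "\<not> 2 \<le> \<bar>z\<bar>"
  proof
    assume "2 \<le> \<bar>z\<bar>"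
    then have "2 * 2 \<le> \<bar>z\<bar> * \<bar>z\<bar>" by (intro mult_mono) auto
    with assms show False by (simp add: abs_mult_self_eq)
  qed
  then show ?thesis by auto
qed

lemma e8_root_integral_coords:
  assumes "r \<in> e8_roots" "\<forall>k\<in>{1..8}. r k \<in> \<int>"
  obtains i j a b where "1 \<le> i" "i < j" "j \<le> 8" "a \<in> {-1, 1}" "b \<in> {-1, 1}"
    "r = integral_root i j a b"
proof -
  have supp: "\<And>k. k \<notin> {1..8} \<Longrightarrow> r k = 0" and norm: "(\<Sum>k=1..8. r k * r k) = 2"
    using assms(1) by (auto simp: e8_roots_def e8_lattice_def inner8_def)
  define P where "P = {k \<in> {1..8}. r k \<noteq> 0}"
  have unit: "r k \<in> {-1, 1}" if "k \<in> P" for k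
  proof -
    have "r k \<in> \<int>"
      using assms(2) that by (auto simp: P_def)
    then obtain z :: int where z: "r k = of_int z"
      by (rule Ints_cases)
    have "r k * r k \<le> (\<Sum>k=1..8. r k * r k)"
      using that by (intro member_le_sum) (auto simp: P_def)
    with norm z have "z * z \<le> 2"
      by (metis of_int_le_iff of_int_mult of_int_numeral)
    then have "z \<in> {-1, 0, 1}"
      by (rule int_square_le_2)
    with z that show ?thesis
      by (auto simp: P_def)
  qed
  have "(\<Sum>k=1..8. r k * r k) = (\<Sum>k\<in>P. r k * r k)"
    by (rule sum.mono_neutral_right) (auto simp: P_def)
  also have "\<dots> = (\<Sum>k\<in>P. 1)"
    by (intro sum.cong) (auto dest!: unit)
  finally have "card P = 2"
    using norm by simp
  then obtain i j where P: "P = {i, j}" "i < j"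
    by (auto simp: card_2_iff) (metis insert_commute linorder_neqE_nat)
  define a where "a = (if r i = 1 then 1 else -1 :: int)"
  define b where "b = (if r j = 1 then 1 else -1 :: int)"
  have "r = integral_root i j a b"
  proof
    fix k
    show "r k = integral_root i j a b k"
      using unit[of i] unit[of j] supp[of k] P
      by (auto simp: integral_root_def a_def b_def P_def)
  qed
  moreover have "1 \<le> i" "j \<le> 8"
    using P by (auto simp: P_def)
  moreover have "a \<in> {-1, 1}" "b \<in> {-1, 1}"
    by (auto simp: a_def b_def)
  ultimately show ?thesis
    using that P(2) by blast
qed

lemma e8_root_half_integral_coords:
  assumes "r \<in> e8_roots" "\<forall>k\<in>{1..8}. r k - 1/2 \<in> \<int>"
  obtains \<epsilon> where "\<forall>k\<in>{1..8}. \<epsilon> k \<in> {-1, 1}" "(\<Prod>k=1..8. \<epsilon> k) = 1" "r = half_root \<epsilon>"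
proof -
  have supp: "\<And>k. k \<notin> {1..8} \<Longrightarrow> r k = 0" and norm: "(\<Sum>k=1..8. r k * r k) = 2"
    and "\<exists>c::int. (\<Sum>k=1..8. r k) = 2 * of_int c"
    using assms(1) by (auto simp: e8_roots_def e8_lattice_def inner8_def)
  then obtain c :: int where c: "(\<Sum>k=1..8. r k) = 2 * of_int c"
    by blast
  have excess_nonneg: "r k * r k - 1/4 \<ge> 0" if "k \<in> {1..8}" for k
  proof -
    have "r k - 1/2 \<in> \<int>"
      using assms(2) that by blast
    then obtain z :: int where z: "r k - 1/2 = of_int z"
      by (rule Ints_cases)
    have "z * (z + 1) \<ge> 0"
      by (cases "z \<ge> 0") (auto intro: mult_nonneg_nonneg mult_nonpos_nonpos)
    moreover have "r k * r k - 1/4 = of_int (z * (z + 1))"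
      using z by (simp add: algebra_simps eq_diff_eq)
    ultimately show ?thesis
      by (simp only: of_int_0_le_iff)
  qed
  have "(\<Sum>k=1..8. r k * r k - 1/4) = 0"
    using norm by (simp add: sum_subtractf)
  then have "\<forall>k\<in>{1..8}. r k * r k - 1/4 = 0"
    by (subst (asm) sum_nonneg_eq_0_iff) (use excess_nonneg in auto)
  then have half: "r k = 1/2 \<or> r k = -1/2" if "k \<in> {1..8}" for k
  proof -
    have "(r k - 1/2) * (r k + 1/2) = 0"
      using \<open>\<forall>k\<in>{1..8}. r k * r k - 1/4 = 0\<close> that by (simp add: algebra_simps)
    then show ?thesis by auto
  qed
  define \<epsilon> where "\<epsilon> k = (if r k > 0 then 1 else -1 :: int)" for k
  have signs: "\<forall>k\<in>{1..8}. \<epsilon> k \<in> {-1, 1}"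
    by (simp add: \<epsilon>_def)
  have r: "r = half_root \<epsilon>"
  proof
    fix k
    show "r k = half_root \<epsilon> k"
      using half[of k] supp[of k] by (auto simp: half_root_def \<epsilon>_def)
  qed
  have "of_int (\<Sum>k=1..8. \<epsilon> k) / 2 = (2 * of_int c :: real)"
    using inner8_half_root[of "\<lambda>_. 1" \<epsilon>] c by (simp add: inner8_def r)
  then have "(\<Sum>k=1..8. \<epsilon> k) = 4 * c"
    by linarith
  then have "(\<Prod>k=1..8. \<epsilon> k) = 1"
    using four_dvd_sum_signs_iff[of "{1..8::nat}" \<epsilon>] signs by simp
  with signs r show ?thesis
    using that by blast
qed

lemma e8_roots_cases:
  assumes "r \<in> e8_roots"
  obtains (integral) i j a b where "1 \<le> i" "i < j" "j \<le> 8" "a \<in> {-1, 1}" "b \<in> {-1, 1}"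
      "r = integral_root i j a b"
    | (half) \<epsilon> where "\<forall>k\<in>{1..8}. \<epsilon> k \<in> {-1, 1}" "(\<Prod>k=1..8. \<epsilon> k) = 1" "r = half_root \<epsilon>"
  using assms e8_root_integral_coords e8_root_half_integral_coords
  by (auto simp: e8_roots_def e8_lattice_def) blast+

lemma integral_root_inject:
  assumes "integral_root i j a b = integral_root i' j' a' b'"
    "i < j" "i' < j'" "a \<noteq> 0" "b \<noteq> 0" "a' \<noteq> 0" "b' \<noteq> 0"
  shows "i = i' \<and> j = j' \<and> a = a' \<and> b = b'"
proof -
  have "integral_root i j a b k = integral_root i' j' a' b' k" for k
    using assms(1) by simp
  from this[of i] this[of j] this[of i'] this[of j'] show ?thesis
    using assms(2-) by (auto simp: integral_root_def split: if_splits)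
qed

definition l2_roots :: "(nat \<Rightarrow> real) set" where
  "l2_roots = (\<lambda>((i, j), (a, b)). integral_root i j a b) `
     ({(1, 2)} \<times> ({-1, 1} \<times> {-1, 1}) \<union> {(3, 4), (3, 5), (4, 5)} \<times> {(1, -1), (-1, 1)})"

lemma card_l2_roots: "card l2_roots = 10"
proof -
  let ?P = "{(1::nat, 2::nat)} \<times> ({-1::int, 1} \<times> {-1::int, 1}) \<union> {(3, 4), (3, 5), (4, 5)} \<times> {(1, -1), (-1, 1)}"
  have "inj_on (\<lambda>((i, j), (a, b)). integral_root i j a b) ?P"
    by (rule inj_onI) (auto dest: integral_root_inject)
  then have "card l2_roots = card ?P"
    unfolding l2_roots_def by (rule card_image)
  also have "\<dots> = 10"
    by simp
  finally show ?thesis .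
qed

lemma l2_roots_coords: "r \<in> l2_roots \<Longrightarrow> r 3 + r 4 + r 5 = 0 \<and> r 6 = 0 \<and> r 7 = 0 \<and> r 8 = 0"
  by (auto simp: l2_roots_def integral_root_def)

lemma inner8_lvec:
  "inner8 (lvec m5 m6 m7 m8) x = of_int m5 * (x 3 + x 4 + x 5) + of_int m6 * x 6 + of_int m7 * x 7 + of_int m8 * x 8"
  unfolding inner8_def atLeastAtMost_1_8 by (simp add: lvec_def algebra_simps)

lemma l2_roots_subset_orth_roots: "l2_roots \<subseteq> {r \<in> e8_roots. inner8 (lvec m5 m6 m7 m8) r = 0}"
proof
  fix r assume r: "r \<in> l2_roots"
  then have "r \<in> e8_roots"
    by (auto simp: l2_roots_def intro: integral_root_in_e8_roots)
  moreover have "inner8 (lvec m5 m6 m7 m8) r = 0"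
    using l2_roots_coords[OF r] by (simp add: inner8_lvec)
  ultimately show "r \<in> {r \<in> e8_roots. inner8 (lvec m5 m6 m7 m8) r = 0}"
    by simp
qed

lemma inj_on_abs_lvec_iff:
  "inj_on (\<lambda>k. \<bar>lvec m5 m6 m7 m8 k\<bar>) {1, 3, 6, 7, 8} \<longleftrightarrow>
     m5 \<noteq> 0 \<and> m6 \<noteq> 0 \<and> m7 \<noteq> 0 \<and> m8 \<noteq> 0 \<and> \<bar>m5\<bar> \<noteq> \<bar>m6\<bar> \<and> \<bar>m5\<bar> \<noteq> \<bar>m7\<bar> \<and> \<bar>m5\<bar> \<noteq> \<bar>m8\<bar> \<and>
     \<bar>m6\<bar> \<noteq> \<bar>m7\<bar> \<and> \<bar>m6\<bar> \<noteq> \<bar>m8\<bar> \<and> \<bar>m7\<bar> \<noteq> \<bar>m8\<bar>"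
  by (simp add: lvec_def conj_ac flip: of_int_abs)

lemma orth_integral_root_in_l2_roots:
  assumes generic: "inj_on (\<lambda>k. \<bar>lvec m5 m6 m7 m8 k\<bar>) {1, 3, 6, 7, 8}"
    and ij: "1 \<le> i" "i < j" "j \<le> 8" and ab: "a \<in> {-1, 1}" "b \<in> {-1, 1}"
    and orth: "inner8 (lvec m5 m6 m7 m8) (integral_root i j a b) = 0"
  shows "integral_root i j a b \<in> l2_roots"
proof -
  let ?l = "lvec m5 m6 m7 m8"
  have "?l i * of_int a + ?l j * of_int b = 0"
    using orth ij by (simp add: inner8_integral_root)
  then have rel: "?l j = - ?l i * of_int (a * b)"
    using ab by auto
  define rep :: "nat \<Rightarrow> nat" where "rep k = (if k \<le> 2 then 1 else if k \<le> 5 then 3 else k)" for k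
  have rep: "rep k \<in> {1, 3, 6, 7, 8}" "?l (rep k) = ?l k" if "1 \<le> k" "k \<le> 8" for k
    using that by (auto simp: rep_def lvec_def)
  have "\<bar>?l (rep i)\<bar> = \<bar>?l (rep j)\<bar>"
    using rep[of i] rep[of j] ij rel ab by (auto simp: abs_mult)
  then have "rep i = rep j"
    using inj_onD[OF generic] rep[of i] rep[of j] ij by auto
  then consider "i = 1" "j = 2" | "2 < i" "j \<le> 5"
    using ij by (auto simp: rep_def split: if_splits)
  then show ?thesis
  proof cases
    case 1
    then show ?thesis
      using ab unfolding l2_roots_def by (intro rev_image_eqI[of "((i, j), (a, b))"]) auto
  next
    case 2
    have "m5 \<noteq> 0"
      using inj_onD[OF generic, of 1 3] by (auto simp: lvec_def)
    moreover have "?l i = of_int m5" "?l j = of_int m5"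
      using 2 ij by (auto simp: lvec_def)
    ultimately have "b = - a"
      using rel ab by auto
    with 2 ij ab have "(i, j) \<in> {(3, 4), (3, 5), (4, 5)}" "(a, b) \<in> {(1, -1), (-1, 1)}"
      by auto
    then show ?thesis
      unfolding l2_roots_def by (intro rev_image_eqI[of "((i, j), (a, b))"]) auto
  qed
qed

definition sign_solutions :: "int \<Rightarrow> int \<Rightarrow> int \<Rightarrow> int \<Rightarrow> int \<Rightarrow> (int \<times> int \<times> int) set" where
  "sign_solutions k m5 m6 m7 m8 = {(s6, s7, s8). s6 \<in> {-1, 1} \<and> s7 \<in> {-1, 1} \<and> s8 \<in> {-1, 1} \<and>
     k * m5 = s6 * m6 + s7 * m7 + s8 * m8}"

lemma finite_sign_solutions: "finite (sign_solutions k m5 m6 m7 m8)"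
proof (rule finite_subset)
  show "sign_solutions k m5 m6 m7 m8 \<subseteq> {-1, 1} \<times> {-1, 1} \<times> {-1, 1}"
    by (auto simp: sign_solutions_def)
qed simp

lemma inner8_lvec_half_root:
  "inner8 (lvec m5 m6 m7 m8) (half_root \<epsilon>)
     = of_int (m5 * (\<epsilon> 3 + \<epsilon> 4 + \<epsilon> 5) + m6 * \<epsilon> 6 + m7 * \<epsilon> 7 + m8 * \<epsilon> 8) / 2"
  by (simp add: inner8_lvec half_root_def add_divide_distrib algebra_simps)

lemma orth_half_root_signs:
  assumes no_sol1: "sign_solutions 1 m5 m6 m7 m8 = {}"
    and signs: "\<forall>k\<in>{1..8}. \<epsilon> k \<in> {-1, 1}"
    and orth: "inner8 (lvec m5 m6 m7 m8) (half_root \<epsilon>) = 0"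
  shows "\<epsilon> 4 = \<epsilon> 3 \<and> \<epsilon> 5 = \<epsilon> 3 \<and> (- \<epsilon> 3 * \<epsilon> 6, - \<epsilon> 3 * \<epsilon> 7, - \<epsilon> 3 * \<epsilon> 8) \<in> sign_solutions 3 m5 m6 m7 m8"
proof -
  have e3: "\<epsilon> 3 \<in> {-1, 1}" and e4: "\<epsilon> 4 \<in> {-1, 1}" and e5: "\<epsilon> 5 \<in> {-1, 1}"
    and e678: "\<epsilon> 6 \<in> {-1, 1}" "\<epsilon> 7 \<in> {-1, 1}" "\<epsilon> 8 \<in> {-1, 1}"
    using signs by auto
  define \<sigma> where "\<sigma> = \<epsilon> 3 + \<epsilon> 4 + \<epsilon> 5"
  have eq: "m5 * \<sigma> + m6 * \<epsilon> 6 + m7 * \<epsilon> 7 + m8 * \<epsilon> 8 = 0"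
    using orth unfolding inner8_lvec_half_root \<sigma>_def
    by (metis divide_eq_0_iff of_int_eq_0_iff zero_neq_numeral)
  have equal: "\<epsilon> 4 = \<epsilon> 3 \<and> \<epsilon> 5 = \<epsilon> 3"
  proof (rule ccontr)
    assume "\<not> ?thesis"
    then have "\<sigma> \<in> {-1, 1}"
      using e3 e4 e5 by (auto simp: \<sigma>_def)
    then have "(- \<sigma> * \<epsilon> 6, - \<sigma> * \<epsilon> 7, - \<sigma> * \<epsilon> 8) \<in> sign_solutions 1 m5 m6 m7 m8"
      using eq e678 by (auto simp: sign_solutions_def algebra_simps)
    with no_sol1 show False
      by simp
  qed
  moreover have "\<sigma> = 3 * \<epsilon> 3"
    using equal by (simp add: \<sigma>_def)
  ultimately show ?thesis
    using eq e3 e678 by (auto simp: sign_solutions_def algebra_simps)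
qed

(* The sign of e2 is forced by the product condition. *)
definition extra_signs :: "int \<Rightarrow> int \<Rightarrow> int \<times> int \<times> int \<Rightarrow> nat \<Rightarrow> int" where
  "extra_signs p q = (\<lambda>(s6, s7, s8) k. if k = 1 then p else if k = 2 then - p * s6 * s7 * s8
     else if k \<le> 5 then q else if k = 6 then - q * s6 else if k = 7 then - q * s7 else - q * s8)"

lemma extra_signs_signs:
  assumes "p \<in> {-1, 1}" "q \<in> {-1, 1}" "s6 \<in> {-1, 1}" "s7 \<in> {-1, 1}" "s8 \<in> {-1, 1}"
  shows "\<forall>k\<in>{1..8}. extra_signs p q (s6, s7, s8) k \<in> {-1, 1}"
    and "(\<Prod>k=1..8. extra_signs p q (s6, s7, s8) k) = 1"
  using assms unfolding atLeastAtMost_1_8 by (auto simp: extra_signs_def)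

lemma extra_root_in_orth_roots:
  assumes pq: "p \<in> {-1, 1}" "q \<in> {-1, 1}" and sol: "(s6, s7, s8) \<in> sign_solutions 3 m5 m6 m7 m8"
  shows "half_root (extra_signs p q (s6, s7, s8)) \<in> {r \<in> e8_roots. inner8 (lvec m5 m6 m7 m8) r = 0} - l2_roots"
proof -
  let ?r = "half_root (extra_signs p q (s6, s7, s8))"
  have s: "s6 \<in> {-1, 1}" "s7 \<in> {-1, 1}" "s8 \<in> {-1, 1}" and rel: "3 * m5 = s6 * m6 + s7 * m7 + s8 * m8"
    using sol by (auto simp: sign_solutions_def)
  have "?r \<in> e8_roots"
    using extra_signs_signs[OF pq s] by (rule half_root_in_e8_roots)
  moreover have "inner8 (lvec m5 m6 m7 m8) ?r = 0"
  proof -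
    have "m5 * (q + q + q) + m6 * (- q * s6) + m7 * (- q * s7) + m8 * (- q * s8)
        = q * (3 * m5 - (s6 * m6 + s7 * m7 + s8 * m8))"
      by (simp add: algebra_simps)
    then show ?thesis
      using rel by (simp add: inner8_lvec_half_root extra_signs_def)
  qed
  moreover have "?r \<notin> l2_roots"
    using pq s l2_roots_coords[of ?r] by (auto simp: half_root_def extra_signs_def)
  ultimately show ?thesis
    by simp
qed

lemma orth_roots_minus_l2_roots:
  assumes generic: "inj_on (\<lambda>k. \<bar>lvec m5 m6 m7 m8 k\<bar>) {1, 3, 6, 7, 8}"
    and no_sol1: "sign_solutions 1 m5 m6 m7 m8 = {}"
  shows "{r \<in> e8_roots. inner8 (lvec m5 m6 m7 m8) r = 0} - l2_roots
    = (\<lambda>(p, q, s). half_root (extra_signs p q s)) ` ({-1, 1} \<times> {-1, 1} \<times> sign_solutions 3 m5 m6 m7 m8)"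
    (is "?S - l2_roots = ?f ` ?D")
proof
  show "?S - l2_roots \<subseteq> ?f ` ?D"
  proof
    fix r assume r: "r \<in> ?S - l2_roots"
    then have "r \<in> e8_roots" by simp
    then show "r \<in> ?f ` ?D"
    proof (cases rule: e8_roots_cases)
      case (integral i j a b)
      then have "r \<in> l2_roots"
        using r orth_integral_root_in_l2_roots[OF generic integral(1-5)] by simp
      with r show ?thesis by simp
    next
      case (half \<epsilon>)
      let ?s = "(- \<epsilon> 3 * \<epsilon> 6, - \<epsilon> 3 * \<epsilon> 7, - \<epsilon> 3 * \<epsilon> 8)"
      have eqs: "\<epsilon> 4 = \<epsilon> 3" "\<epsilon> 5 = \<epsilon> 3" and sol: "?s \<in> sign_solutions 3 m5 m6 m7 m8"
        using orth_half_root_signs[OF no_sol1 half(1)] r half(3) by auto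
      have "\<epsilon> 1 \<in> {-1, 1}" "\<epsilon> 2 \<in> {-1, 1}" "\<epsilon> 3 \<in> {-1, 1}"
        "\<epsilon> 6 \<in> {-1, 1}" "\<epsilon> 7 \<in> {-1, 1}" "\<epsilon> 8 \<in> {-1, 1}"
        using half(1) by auto
      moreover have "\<epsilon> 1 * \<epsilon> 2 * \<epsilon> 3 * \<epsilon> 4 * \<epsilon> 5 * \<epsilon> 6 * \<epsilon> 7 * \<epsilon> 8 = 1"
        using half(2) unfolding atLeastAtMost_1_8 by (simp add: mult.assoc)
      ultimately have e2: "\<epsilon> 2 = \<epsilon> 1 * \<epsilon> 3 * \<epsilon> 6 * \<epsilon> 7 * \<epsilon> 8" and e3: "\<epsilon> 3 \<in> {-1, 1}"
        using eqs by auto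
      have "r = ?f (\<epsilon> 1, \<epsilon> 3, ?s)"
        unfolding half(3) prod.case
      proof (rule half_root_cong)
        fix k :: nat assume "k \<in> {1..8}"
        then show "\<epsilon> k = extra_signs (\<epsilon> 1) (\<epsilon> 3) ?s k"
          using e2 e3 eqs unfolding atLeastAtMost_1_8 by (auto simp: extra_signs_def)
      qed
      moreover have "(\<epsilon> 1, \<epsilon> 3, ?s) \<in> ?D"
        using half(1) sol by auto
      ultimately show ?thesis
        by (rule image_eqI)
    qed
  qed
  show "?f ` ?D \<subseteq> ?S - l2_roots"
    using extra_root_in_orth_roots by (force simp: sign_solutions_def)
qed

lemma card_orth_roots_lvec:
  assumes generic: "inj_on (\<lambda>k. \<bar>lvec m5 m6 m7 m8 k\<bar>) {1, 3, 6, 7, 8}"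
    and no_sol1: "sign_solutions 1 m5 m6 m7 m8 = {}"
  shows "num_orth_roots (lvec m5 m6 m7 m8) = 10 + 4 * card (sign_solutions 3 m5 m6 m7 m8)"
proof -
  let ?S = "{r \<in> e8_roots. inner8 (lvec m5 m6 m7 m8) r = 0}"
  let ?D = "{-1, 1} \<times> {-1, 1} \<times> sign_solutions 3 m5 m6 m7 m8"
  let ?f = "\<lambda>(p, q, s). half_root (extra_signs p q s)"
  have "inj_on ?f ?D"
  proof (rule inj_onI)
    fix x y assume "x \<in> ?D" "y \<in> ?D" and eq: "?f x = ?f y"
    obtain p q s6 s7 s8 where x: "x = (p, q, s6, s7, s8)" by (rule prod_cases5)
    obtain p' q' s6' s7' s8' where y: "y = (p', q', s6', s7', s8')" by (rule prod_cases5)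
    have q: "q \<in> {-1, 1}"
      using \<open>x \<in> ?D\<close> x by simp
    have "extra_signs p q (s6, s7, s8) k = extra_signs p' q' (s6', s7', s8') k" if "k \<in> {1..8}" for k
      using half_root_eqD[OF _ that] eq by (simp add: x y)
    from this[of 1] this[of 3] this[of 6] this[of 7] this[of 8] q show "x = y"
      by (auto simp: x y extra_signs_def)
  qed
  then have "card (?S - l2_roots) = 4 * card (sign_solutions 3 m5 m6 m7 m8)"
    unfolding orth_roots_minus_l2_roots[OF generic no_sol1] by (simp add: card_image card_cartesian_product)
  moreover have "finite (?S - l2_roots)"
    unfolding orth_roots_minus_l2_roots[OF generic no_sol1] by (simp add: finite_sign_solutions)
  moreover have "finite l2_roots"
    using card_l2_roots by (metis card.infinite zero_neq_numeral)
  ultimately have "card ?S = card l2_roots + 4 * card (sign_solutions 3 m5 m6 m7 m8)"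
    using card_Un_disjoint[of l2_roots "?S - l2_roots"] l2_roots_subset_orth_roots[of m5 m6 m7 m8]
    by (simp add: Un_absorb1)
  then show ?thesis
    by (simp add: num_orth_roots_def card_l2_roots)
qed

lemma orth_root_outside_l2_roots:
  assumes "\<not> inj_on (\<lambda>k. \<bar>lvec m5 m6 m7 m8 k\<bar>) {1, 3, 6, 7, 8} \<or> sign_solutions 1 m5 m6 m7 m8 \<noteq> {}"
  shows "\<exists>r\<in>e8_roots. inner8 (lvec m5 m6 m7 m8) r = 0 \<and> r \<notin> l2_roots"
  using assms
proof
  let ?l = "lvec m5 m6 m7 m8"
  assume "\<not> inj_on (\<lambda>k. \<bar>?l k\<bar>) {1, 3, 6, 7, 8}"
  then obtain i j where ij: "i \<in> {1, 3, 6, 7, 8}" "j \<in> {1, 3, 6, 7, 8}" "i < j" "\<bar>?l i\<bar> = \<bar>?l j\<bar>"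
    unfolding inj_on_def by (metis linorder_neqE_nat)
  define b where "b = (if ?l i = ?l j then -1 else 1 :: int)"
  let ?r = "integral_root i j 1 b"
  have "?r \<in> e8_roots"
    using ij by (intro integral_root_in_e8_roots) (auto simp: b_def)
  moreover have "inner8 ?l ?r = 0"
    using ij by (subst inner8_integral_root) (auto simp: b_def abs_eq_iff)
  moreover have "?r \<notin> l2_roots"
  proof
    assume "?r \<in> l2_roots"
    then have "?r 3 + ?r 4 + ?r 5 = 0 \<and> ?r 6 = 0 \<and> ?r 7 = 0 \<and> ?r 8 = 0"
      by (rule l2_roots_coords)
    moreover have "b \<noteq> 0"
      by (simp add: b_def)
    ultimately show False
      using ij by (auto simp: integral_root_def)
  qed
  ultimately show ?thesis
    by blast
next
  assume "sign_solutions 1 m5 m6 m7 m8 \<noteq> {}"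
  then obtain s6 s7 s8 where s: "s6 \<in> {-1, 1}" "s7 \<in> {-1, 1}" "s8 \<in> {-1, 1}"
    and rel: "m5 = s6 * m6 + s7 * m7 + s8 * m8"
    by (auto simp: sign_solutions_def)
  define \<epsilon> :: "nat \<Rightarrow> int" where "\<epsilon> k = (if k = 2 then s6 * s7 * s8 else if k = 5 then -1
      else if k = 6 then - s6 else if k = 7 then - s7 else if k = 8 then - s8 else 1)" for k
  have "half_root \<epsilon> \<in> e8_roots"
    using s by (intro half_root_in_e8_roots, unfold atLeastAtMost_1_8) (auto simp: \<epsilon>_def)
  moreover have "inner8 (lvec m5 m6 m7 m8) (half_root \<epsilon>) = 0"
    using rel by (simp add: inner8_lvec_half_root \<epsilon>_def)
  moreover have "half_root \<epsilon> \<notin> l2_roots"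
  proof
    assume "half_root \<epsilon> \<in> l2_roots"
    from l2_roots_coords[OF this] s show False
      by (auto simp: half_root_def \<epsilon>_def)
  qed
  ultimately show ?thesis
    by blast
qed

lemma generic_if_num_orth_roots_10:
  assumes "num_orth_roots (lvec m5 m6 m7 m8) = 10"
  shows "inj_on (\<lambda>k. \<bar>lvec m5 m6 m7 m8 k\<bar>) {1, 3, 6, 7, 8} \<and> sign_solutions 1 m5 m6 m7 m8 = {}"
proof -
  let ?S = "{r \<in> e8_roots. inner8 (lvec m5 m6 m7 m8) r = 0}"
  have "finite ?S" "card l2_roots = card ?S"
    using assms by (auto simp: num_orth_roots_def card_l2_roots intro: card_ge_0_finite)
  then have "l2_roots = ?S"
    using card_subset_eq[OF _ l2_roots_subset_orth_roots] by blast
  then have "\<not> (\<exists>r\<in>e8_roots. inner8 (lvec m5 m6 m7 m8) r = 0 \<and> r \<notin> l2_roots)"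
    by auto
  then show ?thesis
    using orth_root_outside_l2_roots by blast
qed

theorem proposition7p8:
  fixes m5 m6 m7 m8 :: int
  assumes "even (m5 + m6 + m7 + m8)"
  defines "m \<equiv> (\<lambda>j::nat. if j = 5 then m5 else if j = 6 then m6 else if j = 7 then m7 else m8)"
  defines "condi \<equiv> (\<forall>j\<in>{5..8}. m j \<noteq> 0) \<and> (\<forall>i\<in>{5..8}. \<forall>j\<in>{5..8}. i < j \<longrightarrow> m i \<noteq> m j \<and> m i \<noteq> - m j)"
  defines "condii \<equiv> (\<lambda>k::int. \<forall>s6\<in>{-1,1::int}. \<forall>s7\<in>{-1,1::int}. \<forall>s8\<in>{-1,1::int}.
              k * m5 \<noteq> s6 * m6 + s7 * m7 + s8 * m8)"
  shows "(num_orth_roots (lvec m5 m6 m7 m8) = 10 \<longleftrightarrow> condi \<and> condii 1 \<and> condii 3) \<and>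
         (condi \<and> condii 1 \<and>
            card {(s6, s7, s8). s6 \<in> {-1,1::int} \<and> s7 \<in> {-1,1::int} \<and> s8 \<in> {-1,1::int} \<and>
                   3 * m5 = s6 * m6 + s7 * m7 + s8 * m8} = 1
          \<longrightarrow> num_orth_roots (lvec m5 m6 m7 m8) = 14)"
proof -
  let ?l = "lvec m5 m6 m7 m8"
  have "{5..8::nat} = {5, 6, 7, 8}"
    by auto
  then have condi_iff: "condi \<longleftrightarrow> inj_on (\<lambda>k. \<bar>?l k\<bar>) {1, 3, 6, 7, 8}"
    unfolding condi_def m_def inj_on_abs_lvec_iff by (simp add: abs_eq_iff)
  have condii_iff: "condii k \<longleftrightarrow> sign_solutions k m5 m6 m7 m8 = {}" for k
    unfolding condii_def sign_solutions_def by blast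
  have count: "num_orth_roots ?l = 10 + 4 * card (sign_solutions 3 m5 m6 m7 m8)" if "condi \<and> condii 1"
    using that by (simp add: condi_iff condii_iff card_orth_roots_lvec)
  have generic_if_10: "condi \<and> condii 1" if "num_orth_roots ?l = 10"
    using generic_if_num_orth_roots_10[OF that] by (simp add: condi_iff condii_iff)
  have no_sol3: "condii 3 \<longleftrightarrow> card (sign_solutions 3 m5 m6 m7 m8) = 0"
    using finite_sign_solutions by (simp add: condii_iff)
  show ?thesis
    unfolding sign_solutions_def[symmetric]
  proof (intro conjI)
    show "num_orth_roots ?l = 10 \<longleftrightarrow> condi \<and> condii 1 \<and> condii 3"
    proof
      assume "num_orth_roots ?l = 10"
      with generic_if_10 count no_sol3 show "condi \<and> condii 1 \<and> condii 3"
        by simp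
    next
      assume "condi \<and> condii 1 \<and> condii 3"
      with count no_sol3 show "num_orth_roots ?l = 10"
        by simp
    qed
    show "condi \<and> condii 1 \<and> card (sign_solutions 3 m5 m6 m7 m8) = 1 \<longrightarrow> num_orth_roots ?l = 14"
      using count by simp
  qed
qed

end
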